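(* Let $\mathbf c\in\mathbb N^\infty$ with $\|\mathbf c\|\ge2$. Then $$\frac{(|\mathbf c|+\|\mathbf c\|-3)!}{(|\mathbf c|-1)!}\,(\|\mathbf c\|-1)=\frac12\sum_{\substack{\mathbf c=\mathbf a+\mathbf b\\ \mathbf a,\mathbf b\ne0}}\binom{\mathbf c}{\mathbf a,\mathbf b}\frac{(|\mathbf a|+\|\mathbf a\|-2)!\,(|\mathbf b|+\|\mathbf b\|-2)!}{(|\mathbf a|-1)!\,(|\mathbf b|-1)!},$$ the sum running over $\mathbf a,\mathbf b\in\mathbb N^\infty$.
   Context: $\mathbb N^\infty$ is the set of sequences $\mathbf d=(d_1,d_2,\dots)$ of nonnegative integers, almost all zero, with componentwise addition; $|\mathbf d|=\sum_iid_i$, $\|\mathbf d\|=\sum_id_i$, and $\binom{\mathbf c}{\mathbf a,\mathbf b}=\prod_{i\ge1}\frac{c_i!}{a_i!\,b_i!}$. *)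

theory Defs
  imports Complex_Main
begin

text \<open>Elements of N^infinity are represented as functions d :: nat => nat with
  finite support, where only indices i >= 1 are used (d 0 = 0).\<close>

definition Ninf :: "(nat \<Rightarrow> nat) set" where
  "Ninf = {d. d 0 = 0 \<and> finite {i. d i \<noteq> 0}}"

definition supp :: "(nat \<Rightarrow> nat) \<Rightarrow> nat set" where
  "supp d = {i. d i \<noteq> 0}"

text \<open>|d| = sum_i i d_i\<close>
definition wt :: "(nat \<Rightarrow> nat) \<Rightarrow> nat" where
  "wt d = (\<Sum>i\<in>supp d. i * d i)"

text \<open>||d|| = sum_i d_i\<close>
definition len :: "(nat \<Rightarrow> nat) \<Rightarrow> nat" where
  "len d = (\<Sum>i\<in>supp d. d i)"

definition multibinom :: "(nat \<Rightarrow> nat) \<Rightarrow> (nat \<Rightarrow> nat) \<Rightarrow> (nat \<Rightarrow> nat) \<Rightarrow> real" where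
  "multibinom c a b = (\<Prod>i\<in>supp c. fact (c i) / (fact (a i) * fact (b i)))"

end

theory Submission
  imports Defs
begin

text \<open>
  For \<open>a \<noteq> 0\<close> let \<open>A a x = x (x + |a| + 1) (x + |a| + 2) \<cdots> (x + |a| + \<parallel>a\<parallel> - 1)\<close>, and
  \<open>A 0 x = 1\<close>: a multivariate analogue of the Abel polynomials \<open>x (x + n)\<^sup>n\<^sup>-\<^sup>1\<close>. They are of
  binomial type, \<open>\<Sum>a\<le>c. (c choose a) A a x A (c - a) y = A c (x + y)\<close>: since
  \<open>A a x - A a (x - 1) = \<Sum>i. a\<^sub>i A (a - e\<^sub>i) (x + i)\<close>, the absorption identity
  \<open>k (n choose k) = n (n - 1 choose k - 1)\<close> and induction on \<open>\<parallel>c\<parallel>\<close> show that both sides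
  have the same backward difference in \<open>x\<close>; they agree at \<open>x = 0\<close>, hence at every
  integer \<open>x\<close>, which is all that is needed.

  For \<open>a \<noteq> 0\<close> we have \<open>A a (-1) = -(|a| + \<parallel>a\<parallel> - 2)! / (|a| - 1)!\<close>. So at \<open>x = y = -1\<close>
  the convolution is twice the sum of the proposition plus the two terms \<open>a = 0\<close> and
  \<open>a = c\<close>, and evaluating \<open>A c (-2)\<close> gives the left-hand side.
\<close>

lemma pochhammer_of_nat_eq_fact_div:
  assumes "1 \<le> w"
  shows "pochhammer (of_nat w :: 'a::field_char_0) k = fact (w + k - 1) / fact (w - 1)"
proof -
  obtain m where w: "w = Suc m" using assms by (cases w) auto
  have "(fact (m + k) :: 'a) = pochhammer 1 m * pochhammer (1 + of_nat m) k"
    unfolding pochhammer_fact by (rule pochhammer_product')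
  then show ?thesis
    by (simp add: w pochhammer_fact[symmetric] field_simps)
qed

lemma len_eq_sum_superset: "supp a \<subseteq> J \<Longrightarrow> finite J \<Longrightarrow> len a = (\<Sum>i\<in>J. a i)"
  unfolding len_def by (rule sum.mono_neutral_left) (auto simp: supp_def)

lemma wt_eq_sum_superset: "supp a \<subseteq> J \<Longrightarrow> finite J \<Longrightarrow> wt a = (\<Sum>i\<in>J. i * a i)"
  unfolding wt_def by (rule sum.mono_neutral_left) (auto simp: supp_def)

lemma len_eq_0_iff: "finite (supp a) \<Longrightarrow> len a = 0 \<longleftrightarrow> a = (\<lambda>_. 0)"
  by (auto simp: len_def supp_def)

lemma len_le_wt:
  assumes "a 0 = 0"
  shows "len a \<le> wt a"
  unfolding len_def wt_def
proof (rule sum_mono)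
  fix i assume "i \<in> supp a"
  with assms have "i \<ge> 1" by (cases i) (auto simp: supp_def)
  then show "a i \<le> i * a i" by simp
qed

lemma supp_fun_upd_pred: "supp (a(i := a i - 1)) \<subseteq> supp a"
  by (auto simp: supp_def)

lemma
  assumes "finite (supp a)" "a i \<noteq> 0"
  shows len_fun_upd_pred: "len (a(i := a i - 1)) + 1 = len a"
    and wt_fun_upd_pred: "wt (a(i := a i - 1)) + i = wt a"
proof -
  have i: "i \<in> supp a" using assms(2) by (simp add: supp_def)
  have "len (a(i := a i - 1)) = (a i - 1) + (\<Sum>j\<in>supp a - {i}. a j)"
    using len_eq_sum_superset[OF supp_fun_upd_pred assms(1)] assms(1) i by (simp add: sum.remove)
  moreover have "len a = a i + (\<Sum>j\<in>supp a - {i}. a j)"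
    using len_eq_sum_superset[OF order_refl assms(1)] assms(1) i by (simp add: sum.remove)
  ultimately show "len (a(i := a i - 1)) + 1 = len a" using assms(2) by simp
  have "wt (a(i := a i - 1)) = i * (a i - 1) + (\<Sum>j\<in>supp a - {i}. j * a j)"
    using wt_eq_sum_superset[OF supp_fun_upd_pred assms(1)] assms(1) i by (simp add: sum.remove)
  moreover have "wt a = i * a i + (\<Sum>j\<in>supp a - {i}. j * a j)"
    using wt_eq_sum_superset[OF order_refl assms(1)] assms(1) i by (simp add: sum.remove)
  moreover have "i * (a i - 1) + i = i * a i" using assms(2)
    by (simp add: diff_mult_distrib2)
  ultimately show "wt (a(i := a i - 1)) + i = wt a" by simp
qed

definition abel_poly :: "real \<Rightarrow> (nat \<Rightarrow> nat) \<Rightarrow> real" where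
  "abel_poly x a = (if len a = 0 then 1 else x * pochhammer (x + real (wt a) + 1) (len a - 1))"

lemma sum_mult_shift_eq:
  assumes "finite J" "supp a \<subseteq> J"
  shows "(\<Sum>i\<in>J. real (a i) * (x + real i)) = real (len a) * x + real (wt a)"
  using len_eq_sum_superset[OF assms(2,1)] wt_eq_sum_superset[OF assms(2,1)]
  by (simp add: algebra_simps sum.distrib sum_distrib_left)

lemma abel_poly_backward_difference:
  assumes "finite J" "supp a \<subseteq> J"
  shows "abel_poly x a - abel_poly (x - 1) a
    = (\<Sum>i\<in>J. real (a i) * abel_poly (x + real i) (a(i := a i - 1)))"
proof -
  have fin: "finite (supp a)" using assms finite_subset by blast
  have upd: "len (a(i := a i - 1)) + 1 = len a" "real i + real (wt (a(i := a i - 1))) = real (wt a)"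
    if "i \<in> J" "a i \<noteq> 0" for i
    using len_fun_upd_pred[OF fin that(2)] wt_fun_upd_pred[OF fin that(2)] by simp_all
  consider "len a = 0" | "len a = 1" | n where "len a = Suc (Suc n)"
    by (metis One_nat_def not0_implies_Suc)
  then show ?thesis
  proof cases
    case 1
    then have "\<forall>i\<in>J. a i = 0" using len_eq_sum_superset[OF assms(2,1)] assms(1) by simp
    then show ?thesis using 1 by (simp add: abel_poly_def)
  next
    case 2
    have "(\<Sum>i\<in>J. real (a i) * abel_poly (x + real i) (a(i := a i - 1))) = (\<Sum>i\<in>J. real (a i))"
    proof (intro sum.cong refl)
      fix i assume "i \<in> J"
      then show "real (a i) * abel_poly (x + real i) (a(i := a i - 1)) = real (a i)"
        using upd 2 by (cases "a i = 0") (auto simp: abel_poly_def)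
    qed
    then show ?thesis
      using 2 len_eq_sum_superset[OF assms(2,1)] by (simp add: abel_poly_def flip: of_nat_sum)
  next
    case 3
    define P where "P = pochhammer (x + real (wt a) + 1) n"
    have "(\<Sum>i\<in>J. real (a i) * abel_poly (x + real i) (a(i := a i - 1)))
        = (\<Sum>i\<in>J. real (a i) * (x + real i) * P)"
    proof (intro sum.cong refl)
      fix i assume "i \<in> J"
      then show "real (a i) * abel_poly (x + real i) (a(i := a i - 1)) = real (a i) * (x + real i) * P"
        using upd 3 by (cases "a i = 0") (auto simp: abel_poly_def P_def add_ac)
    qed
    also have "\<dots> = (real (len a) * x + real (wt a)) * P"
      by (simp flip: sum_mult_shift_eq[OF assms] add: sum_distrib_right)
    also have "\<dots> = x * ((x + real (wt a) + 1 + real n) * P) - (x - 1) * ((x + real (wt a)) * P)"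
      using 3 by (simp add: algebra_simps)
    also have "\<dots> = abel_poly x a - abel_poly (x - 1) a"
    proof -
      have "pochhammer (x + real (wt a) + 1) (Suc n) = (x + real (wt a) + 1 + real n) * P"
        by (simp add: P_def pochhammer_rec')
      moreover have "pochhammer (x - 1 + real (wt a) + 1) (Suc n) = (x + real (wt a)) * P"
        by (simp add: P_def pochhammer_rec)
      ultimately show ?thesis using 3 by (simp add: abel_poly_def)
    qed
    finally show ?thesis ..
  qed
qed

definition prod_choose :: "(nat \<Rightarrow> nat) \<Rightarrow> (nat \<Rightarrow> nat) \<Rightarrow> real" where
  "prod_choose c a = (\<Prod>i\<in>supp c. real (c i choose a i))"

lemma supp_mono:
  assumes "a \<le> c"
  shows "supp a \<subseteq> supp c"
proof
  fix i assume "i \<in> supp a"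
  moreover have "a i \<le> c i" using assms by (simp add: le_fun_def)
  ultimately show "i \<in> supp c" by (simp add: supp_def)
qed

lemma Ninf_le:
  assumes "c \<in> Ninf" "a \<le> c"
  shows "a \<in> Ninf"
proof -
  have "a 0 \<le> c 0" using assms(2) by (simp add: le_fun_def)
  moreover have "finite (supp a)"
    using assms finite_subset[OF supp_mono] by (auto simp: Ninf_def supp_def)
  ultimately show ?thesis using assms(1) by (simp add: Ninf_def supp_def)
qed

lemma finite_atMost_fun:
  fixes c :: "nat \<Rightarrow> nat"
  assumes "finite (supp c)"
  shows "finite {..c}"
proof (rule finite_subset)
  show "{..c} \<subseteq> {f. \<forall>x. (x \<in> supp c \<longrightarrow> f x \<in> {..len c}) \<and> (x \<notin> supp c \<longrightarrow> f x = 0)}"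
  proof (intro subsetI CollectI allI conjI impI)
    fix f x assume f: "f \<in> {..c}"
    then have fx: "f x \<le> c x" by (simp add: le_fun_def)
    show "f x \<in> {..len c}" if "x \<in> supp c"
      using fx member_le_sum[OF that _ assms, of c] by (simp add: len_def)
    show "f x = 0" if "x \<notin> supp c"
      using fx that by (simp add: supp_def)
  qed
  show "finite {f. \<forall>x. (x \<in> supp c \<longrightarrow> f x \<in> {..len c}) \<and> (x \<notin> supp c \<longrightarrow> f x = (0::nat))}"
    using assms by (intro finite_set_of_finite_funs) auto
qed

lemma prod_choose_superset:
  assumes "finite J" "supp c \<subseteq> J" "a \<le> c"
  shows "prod_choose c a = (\<Prod>j\<in>J. real (c j choose a j))"
  unfolding prod_choose_def
proof (intro prod.mono_neutral_left ballI)
  fix j assume "j \<in> J - supp c"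
  then have "c j = 0" by (simp add: supp_def)
  moreover have "a j \<le> c j" using assms(3) by (simp add: le_fun_def)
  ultimately show "real (c j choose a j) = 1" by simp
qed (use assms in auto)

lemma prod_choose_fun_upd_Suc:
  assumes "finite (supp c)" "c i \<noteq> 0" "a \<le> c(i := c i - 1)"
  shows "prod_choose c (a(i := Suc (a i))) * real (Suc (a i))
    = real (c i) * prod_choose (c(i := c i - 1)) a"
proof -
  define Q where "Q = (\<Prod>j\<in>supp c - {i}. real (c j choose a j))"
  have i: "i \<in> supp c" using assms(2) by (simp add: supp_def)
  have "prod_choose c (a(i := Suc (a i))) = real (c i choose Suc (a i)) * Q"
    unfolding prod_choose_def Q_def using assms(1) i by (simp add: prod.remove)
  moreover have "prod_choose (c(i := c i - 1)) a = real (c i - 1 choose a i) * Q"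
    using prod_choose_superset[OF assms(1) supp_fun_upd_pred assms(3)] assms(1) i
    by (simp add: Q_def prod.remove)
  moreover have "(c i choose Suc (a i)) * Suc (a i) = c i * (c i - 1 choose a i)"
    using Suc_times_binomial_eq[of "c i - 1" "a i"] assms(2) by simp
  then have "real (c i choose Suc (a i)) * real (Suc (a i)) = real (c i) * real (c i - 1 choose a i)"
    by (metis of_nat_mult)
  ultimately show ?thesis by (simp add: algebra_simps)
qed

lemma image_fun_upd_Suc_atMost:
  fixes c :: "nat \<Rightarrow> nat"
  assumes "c i \<noteq> 0"
  shows "(\<lambda>a. a(i := Suc (a i))) ` {..c(i := c i - 1)} = {b \<in> {..c}. b i \<noteq> 0}"
proof
  show "(\<lambda>a. a(i := Suc (a i))) ` {..c(i := c i - 1)} \<subseteq> {b \<in> {..c}. b i \<noteq> 0}"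
  proof (rule image_subsetI)
    fix a assume "a \<in> {..c(i := c i - 1)}"
    then have le: "a j \<le> (c(i := c i - 1)) j" for j by (simp add: le_fun_def)
    have "(a(i := Suc (a i))) j \<le> c j" for j
      using assms le[of j] by (cases "j = i") auto
    then show "a(i := Suc (a i)) \<in> {b \<in> {..c}. b i \<noteq> 0}" by (simp add: le_fun_def)
  qed
  show "{b \<in> {..c}. b i \<noteq> 0} \<subseteq> (\<lambda>a. a(i := Suc (a i))) ` {..c(i := c i - 1)}"
  proof
    fix b assume b: "b \<in> {b \<in> {..c}. b i \<noteq> 0}"
    then have "b(i := b i - 1) \<in> {..c(i := c i - 1)}" by (auto simp: le_fun_def diff_le_mono)
    moreover have "b = (b(i := b i - 1))(i := Suc ((b(i := b i - 1)) i))" using b by auto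
    ultimately show "b \<in> (\<lambda>a. a(i := Suc (a i))) ` {..c(i := c i - 1)}" by blast
  qed
qed

lemma prod_choose_absorption_sum:
  assumes "finite (supp c)" "c i \<noteq> 0"
  shows "(\<Sum>a\<in>{..c}. prod_choose c a * real (a i) * h (a(i := a i - 1)) (c - a))
    = real (c i) * (\<Sum>a\<in>{..c(i := c i - 1)}. prod_choose (c(i := c i - 1)) a * h a (c(i := c i - 1) - a))"
proof -
  define c' where "c' = c(i := c i - 1)"
  define up where "up a = a(i := Suc (a i))" for a :: "nat \<Rightarrow> nat"
  have "inj up"
  proof (rule injI)
    fix a b assume "up a = up b"
    then have "a j = b j" for j
      by (cases "j = i") (auto simp: up_def fun_eq_iff split: if_splits dest: spec[of _ j])
    then show "a = b" by blast
  qed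
  define F where "F a = prod_choose c a * real (a i) * h (a(i := a i - 1)) (c - a)" for a
  have "sum F {..c} = sum F {b \<in> {..c}. b i \<noteq> 0}"
    using finite_atMost_fun[OF assms(1)] by (intro sum.mono_neutral_right) (auto simp: F_def)
  also have "\<dots> = sum F (up ` {..c'})"
    using image_fun_upd_Suc_atMost[of c i, OF assms(2)] by (simp add: up_def c'_def)
  also have "\<dots> = (\<Sum>a\<in>{..c'}. F (up a))"
    using \<open>inj up\<close> by (simp add: sum.reindex inj_on_def)
  also have "\<dots> = (\<Sum>a\<in>{..c'}. real (c i) * (prod_choose c' a * h a (c' - a)))"
  proof (intro sum.cong refl)
    fix a assume "a \<in> {..c'}"
    then have "prod_choose c (up a) * real (up a i) = real (c i) * prod_choose c' a"
      using prod_choose_fun_upd_Suc[OF assms] by (simp add: up_def c'_def)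
    moreover have "(up a)(i := up a i - 1) = a" "c - up a = c' - a"
      by (auto simp: up_def c'_def fun_eq_iff)
    ultimately show "F (up a) = real (c i) * (prod_choose c' a * h a (c' - a))"
      by (simp add: F_def)
  qed
  finally show ?thesis by (simp add: F_def c'_def sum_distrib_left)
qed

definition abel_convolution :: "real \<Rightarrow> real \<Rightarrow> (nat \<Rightarrow> nat) \<Rightarrow> real" where
  "abel_convolution x y c = (\<Sum>a\<in>{..c}. prod_choose c a * abel_poly x a * abel_poly y (c - a))"

lemma abel_poly_zero_fun [simp]: "abel_poly x (\<lambda>_. 0) = 1"
  by (simp add: abel_poly_def len_def supp_def)

lemma abel_poly_zero: "finite (supp a) \<Longrightarrow> abel_poly 0 a = (if a = (\<lambda>_. 0) then 1 else 0)"
  by (simp add: abel_poly_def len_eq_0_iff)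

lemma abel_convolution_zero:
  assumes "finite (supp c)"
  shows "abel_convolution 0 y c = abel_poly y c"
proof -
  have fin: "finite (supp a)" if "a \<in> {..c}" for a
    using that assms supp_mono finite_subset by blast
  have "abel_convolution 0 y c = (\<Sum>a\<in>{\<lambda>_. 0}. prod_choose c a * abel_poly 0 a * abel_poly y (c - a))"
    unfolding abel_convolution_def using finite_atMost_fun[OF assms]
    by (intro sum.mono_neutral_right) (auto simp: abel_poly_zero fin le_fun_def)
  then show ?thesis by (simp add: abel_poly_zero prod_choose_def fun_diff_def)
qed

lemma abel_convolution_backward_difference:
  assumes "finite (supp c)"
  shows "abel_convolution x y c - abel_convolution (x - 1) y c
    = (\<Sum>i\<in>supp c. real (c i) * abel_convolution (x + real i) y (c(i := c i - 1)))"
proof -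
  have "abel_convolution x y c - abel_convolution (x - 1) y c
      = (\<Sum>a\<in>{..c}. prod_choose c a * (abel_poly x a - abel_poly (x - 1) a) * abel_poly y (c - a))"
    unfolding abel_convolution_def by (simp add: algebra_simps flip: sum_subtractf)
  also have "\<dots> = (\<Sum>a\<in>{..c}. \<Sum>i\<in>supp c.
      prod_choose c a * real (a i) * (abel_poly (x + real i) (a(i := a i - 1)) * abel_poly y (c - a)))"
    using abel_poly_backward_difference[OF assms supp_mono]
    by (simp add: sum_distrib_left sum_distrib_right mult_ac)
  also have "\<dots> = (\<Sum>i\<in>supp c. \<Sum>a\<in>{..c}.
      prod_choose c a * real (a i) * (abel_poly (x + real i) (a(i := a i - 1)) * abel_poly y (c - a)))"
    by (rule sum.swap)
  also have "\<dots> = (\<Sum>i\<in>supp c. real (c i) * abel_convolution (x + real i) y (c(i := c i - 1)))"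
  proof (intro sum.cong refl)
    fix i assume "i \<in> supp c"
    then have "c i \<noteq> 0" by (simp add: supp_def)
    from prod_choose_absorption_sum[OF assms this,
        of "\<lambda>a b. abel_poly (x + real i) a * abel_poly y b"]
    show "(\<Sum>a\<in>{..c}. prod_choose c a * real (a i)
          * (abel_poly (x + real i) (a(i := a i - 1)) * abel_poly y (c - a)))
        = real (c i) * abel_convolution (x + real i) y (c(i := c i - 1))"
      by (simp add: abel_convolution_def mult_ac)
  qed
  finally show ?thesis .
qed

theorem abel_convolution_of_int:
  assumes "finite (supp c)"
  shows "abel_convolution (of_int k) y c = abel_poly (of_int k + y) c"
  using assms
proof (induction "len c" arbitrary: c k rule: less_induct)
  case less
  define g where "g k = abel_convolution (of_int k) y c - abel_poly (of_int k + y) c" for k :: int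
  have "g k = g (k - 1)" for k
  proof -
    have IH: "abel_convolution (of_int k + real i) y (c(i := c i - 1))
        = abel_poly (of_int k + y + real i) (c(i := c i - 1))" if "i \<in> supp c" for i
    proof -
      have "c i \<noteq> 0" using that by (simp add: supp_def)
      then have "len (c(i := c i - 1)) < len c"
        using len_fun_upd_pred[OF less.prems] by (metis less_add_one)
      moreover have "finite (supp (c(i := c i - 1)))"
        using less.prems supp_fun_upd_pred finite_subset by blast
      ultimately show ?thesis using less.hyps[of _ "k + int i"] by (simp add: add_ac)
    qed
    have "abel_convolution (of_int k) y c - abel_convolution (of_int k - 1) y c
        = (\<Sum>i\<in>supp c. real (c i) * abel_poly (of_int k + y + real i) (c(i := c i - 1)))"
      using abel_convolution_backward_difference[OF less.prems] IH by simp
    also have "\<dots> = abel_poly (of_int k + y) c - abel_poly (of_int k + y - 1) c"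
      using abel_poly_backward_difference[OF less.prems order_refl] by simp
    finally show ?thesis by (simp add: g_def algebra_simps)
  qed
  moreover have "g 0 = 0"
    using abel_convolution_zero[OF less.prems] by (simp add: g_def)
  ultimately have "g k = 0"
    by (induction k rule: int_induct[where k = 0]) (simp_all, metis add_diff_cancel_right')
  then show ?case by (simp add: g_def)
qed

lemma abel_poly_minus_one:
  "len a \<noteq> 0 \<Longrightarrow> abel_poly (-1) a = - pochhammer (real (wt a)) (len a - 1)"
  by (simp add: abel_poly_def)

lemma interior_convolution_pochhammer:
  assumes "finite (supp c)" "len c \<ge> 2"
  shows "(\<Sum>a\<in>{..c} - {\<lambda>_. 0, c}. prod_choose c a * pochhammer (real (wt a)) (len a - 1)
            * pochhammer (real (wt (c - a))) (len (c - a) - 1))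
    = 2 * (real (len c) - 1) * pochhammer (real (wt c)) (len c - 2)"
proof -
  define P where "P = pochhammer (real (wt c)) (len c - 2)"
  define f where "f a = prod_choose c a * abel_poly (-1) a * abel_poly (-1) (c - a)" for a
  have len_c: "len c - 1 = Suc (len c - 2)" using assms(2) by simp
  have c_nonzero: "c \<noteq> (\<lambda>_. 0)" using assms len_eq_0_iff by fastforce
  have "pochhammer (real (wt c)) (len c - 1) = (real (wt c) + real (len c) - 2) * P"
    unfolding len_c P_def pochhammer_rec' using assms(2) by (simp add: of_nat_diff)
  then have f_ends: "f (\<lambda>_. 0) = - ((real (wt c) + real (len c) - 2) * P)" "f c = f (\<lambda>_. 0)"
    using assms(2) abel_poly_minus_one[of c] by (simp_all add: f_def prod_choose_def fun_diff_def)
  have f_interior: "f a = prod_choose c a * pochhammer (real (wt a)) (len a - 1)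
      * pochhammer (real (wt (c - a))) (len (c - a) - 1)" if "a \<in> {..c} - {\<lambda>_. 0, c}" for a
  proof -
    have "a \<le> c" "c - a \<le> c" "a \<noteq> (\<lambda>_. 0)" "c - a \<noteq> (\<lambda>_. 0)"
      using that by (auto simp: le_fun_def fun_eq_iff intro: antisym)
    moreover from this have "finite (supp a)" "finite (supp (c - a))"
      using finite_subset[OF supp_mono assms(1)] by blast+
    ultimately show ?thesis by (simp add: f_def abel_poly_minus_one len_eq_0_iff)
  qed
  have "sum f {..c} = f (\<lambda>_. 0) + sum f ({..c} - {\<lambda>_. 0})"
    using finite_atMost_fun[OF assms(1)] by (rule sum.remove) (simp add: le_fun_def)
  also have "sum f ({..c} - {\<lambda>_. 0}) = f c + sum f ({..c} - {\<lambda>_. 0} - {c})"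
    using finite_atMost_fun[OF assms(1)] c_nonzero by (intro sum.remove) auto
  also have "{..c} - {\<lambda>_. 0} - {c} = {..c} - {\<lambda>_. 0, c}" by blast
  finally have "sum f {..c} = f (\<lambda>_. 0) + f c + sum f ({..c} - {\<lambda>_. 0, c})" by simp
  moreover have "sum f {..c} = abel_poly (-2) c"
    using abel_convolution_of_int[OF assms(1), of "-1" "-1"] by (simp add: abel_convolution_def f_def)
  moreover have "abel_poly (-2) c = - 2 * pochhammer (real (wt c) - 1) (len c - 1)"
    using assms(2) by (simp add: abel_poly_def)
  moreover have "pochhammer (real (wt c) - 1) (len c - 1) = (real (wt c) - 1) * P"
    unfolding len_c P_def pochhammer_rec by simp
  ultimately show ?thesis
    using f_ends f_interior by (simp add: P_def algebra_simps)
qed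

lemma fact_ratio_eq_pochhammer:
  assumes "a \<in> Ninf" "a \<noteq> (\<lambda>_. 0)"
  shows "fact (wt a + len a - 2) / fact (wt a - 1) = pochhammer (real (wt a)) (len a - 1)"
proof -
  have "len a \<noteq> 0" "len a \<le> wt a"
    using assms len_eq_0_iff len_le_wt by (auto simp: Ninf_def supp_def)
  then have "1 \<le> wt a" "wt a + (len a - 1) - 1 = wt a + len a - 2" by arith+
  then show ?thesis using pochhammer_of_nat_eq_fact_div[where 'a = real, of "wt a" "len a - 1"] by simp
qed

lemma split_pairs_eq_image:
  assumes "c \<in> Ninf"
  shows "{(a, b). a \<in> Ninf \<and> b \<in> Ninf \<and> (\<forall>i. c i = a i + b i) \<and> a \<noteq> (\<lambda>_. 0) \<and> b \<noteq> (\<lambda>_. 0)}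
    = (\<lambda>a. (a, c - a)) ` ({..c} - {\<lambda>_. 0, c})" (is "?S = _")
proof (intro equalityI subsetI)
  fix p assume "p \<in> ?S"
  then obtain a b where p: "p = (a, b)"
    and ab: "\<forall>i. c i = a i + b i" "a \<noteq> (\<lambda>_. 0)" "b \<noteq> (\<lambda>_. 0)" by blast
  from ab(1) have "b = c - a" "a \<le> c" by (simp_all add: fun_eq_iff le_fun_def)
  moreover have "a \<noteq> c"
  proof
    assume "a = c"
    with ab(1) have "b = (\<lambda>_. 0)" by (simp add: fun_eq_iff)
    with ab(3) show False ..
  qed
  ultimately show "p \<in> (\<lambda>a. (a, c - a)) ` ({..c} - {\<lambda>_. 0, c})"
    unfolding p using ab(2) by (intro image_eqI[where x = a]) auto
next
  fix p assume "p \<in> (\<lambda>a. (a, c - a)) ` ({..c} - {\<lambda>_. 0, c})"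
  then obtain a where p: "p = (a, c - a)" and a: "a \<le> c" "a \<noteq> (\<lambda>_. 0)" "a \<noteq> c" by blast
  have "c - a \<le> c" "\<forall>i. c i = a i + (c - a) i" using a(1) by (simp_all add: le_fun_def)
  moreover have "c - a \<noteq> (\<lambda>_. 0)"
  proof
    assume "c - a = (\<lambda>_. 0)"
    with a(1) have "a = c" by (simp add: fun_eq_iff le_fun_def) (meson antisym diff_is_0_eq)
    with a(3) show False ..
  qed
  ultimately show "p \<in> ?S"
    unfolding p using a Ninf_le[OF assms] by simp
qed

lemma multibinom_eq_prod_choose:
  assumes "a \<le> c"
  shows "multibinom c a (c - a) = prod_choose c a"
  unfolding multibinom_def prod_choose_def
proof (rule prod.cong[OF refl])
  fix i have "a i \<le> c i" using assms by (simp add: le_fun_def)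
  then show "fact (c i) / (fact (a i) * fact ((c - a) i)) = real (c i choose a i)"
    by (simp add: binomial_fact)
qed

lemma split_pairs_sum_eq_interior_sum:
  assumes "c \<in> Ninf"
  shows "(\<Sum>(a, b)\<in>{(a, b). a \<in> Ninf \<and> b \<in> Ninf \<and> (\<forall>i. c i = a i + b i) \<and> a \<noteq> (\<lambda>_. 0) \<and> b \<noteq> (\<lambda>_. 0)}.
        multibinom c a b * (fact (wt a + len a - 2) * fact (wt b + len b - 2))
          / (fact (wt a - 1) * fact (wt b - 1)))
    = (\<Sum>a\<in>{..c} - {\<lambda>_. 0, c}. prod_choose c a * pochhammer (real (wt a)) (len a - 1)
            * pochhammer (real (wt (c - a))) (len (c - a) - 1))"
  unfolding split_pairs_eq_image[OF assms] sum.reindex[OF inj_on_convol_ident] comp_def case_prod_conv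
proof (rule sum.cong[OF refl])
  fix a assume "a \<in> {..c} - {\<lambda>_. 0, c}"
  then have "a \<le> c" "a \<noteq> (\<lambda>_. 0)" "c - a \<noteq> (\<lambda>_. 0)"
    by (auto simp: le_fun_def fun_eq_iff intro: antisym)
  moreover have "c - a \<le> c" by (simp add: le_fun_def)
  ultimately have "a \<in> Ninf" "c - a \<in> Ninf" "a \<noteq> (\<lambda>_. 0)" "c - a \<noteq> (\<lambda>_. 0)" "a \<le> c"
    using Ninf_le[OF assms] by auto
  from fact_ratio_eq_pochhammer[OF this(1,3)] fact_ratio_eq_pochhammer[OF this(2,4)]
    multibinom_eq_prod_choose[OF this(5)]
  show "multibinom c a (c - a) * (fact (wt a + len a - 2) * fact (wt (c - a) + len (c - a) - 2))
        / (fact (wt a - 1) * fact (wt (c - a) - 1))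
      = prod_choose c a * pochhammer (real (wt a)) (len a - 1)
          * pochhammer (real (wt (c - a))) (len (c - a) - 1)"
    by (metis (no_types) times_divide_times_eq mult.assoc times_divide_eq_right)
qed

theorem propositionA2:
  fixes c :: "nat \<Rightarrow> nat"
  assumes "c \<in> Ninf" and "len c \<ge> 2"
  shows "fact (wt c + len c - 3) / fact (wt c - 1) * (real (len c) - 1)
    = 1/2 * (\<Sum>(a, b)\<in>{(a, b). a \<in> Ninf \<and> b \<in> Ninf \<and> (\<forall>i. c i = a i + b i) \<and> a \<noteq> (\<lambda>_. 0) \<and> b \<noteq> (\<lambda>_. 0)}.
        multibinom c a b * (fact (wt a + len a - 2) * fact (wt b + len b - 2))
          / (fact (wt a - 1) * fact (wt b - 1)))"
proof -
  have fin: "finite (supp c)" using assms(1) by (simp add: Ninf_def supp_def)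
  have "len c \<le> wt c" using assms(1) len_le_wt by (simp add: Ninf_def)
  then have "1 \<le> wt c" "wt c + (len c - 2) - 1 = wt c + len c - 3"
    using assms(2) by arith+
  then have "fact (wt c + len c - 3) / fact (wt c - 1) = pochhammer (real (wt c)) (len c - 2)"
    using pochhammer_of_nat_eq_fact_div[where 'a = real, of "wt c" "len c - 2"] by simp
  then show ?thesis
    unfolding split_pairs_sum_eq_interior_sum[OF assms(1)] interior_convolution_pochhammer[OF fin assms(2)]
    by simp
qed

end
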